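(* Let $n\ge3$ and $0<t\le s\le1$. There exist $\epsilon=\epsilon(s,n,K)\in(0,\tfrac12]$ and $\bar\delta_0=\bar\delta_0(\epsilon)\in(0,\tfrac12]$ such that the following holds for all $\delta\in(0,\bar\delta_0]$. Let $F\subset C^2([0,1]^{n-1},[0,1])$ be a finite $\delta$-separated cinematic family with cinematic constant $K$ which is a $(\delta,t,\delta^{-2\epsilon})$-set with $\tfrac12\delta^{2\epsilon-t}\le|F|\le\delta^{-t}$ and $\|f\|_{C^2([0,1]^{n-1})}\le K$ for all $f\in F$, and for each $f\in F$ let $E(f)\subset\mathrm{graph}(f)$ be a finite $\delta$-separated $(\delta,n-2+s,\delta^{-2\epsilon})$-set with $|E(f)|=M$, where $\delta^{2\epsilon-(n-2+s)}\le M\le\delta^{-(n-2+s)}$. Then for every $f\in F$, the projection $P_{E(f)}$ of $E(f)$ onto the first $n-1$ coordinates is a $(\delta,n-2+s,\delta^{-3\epsilon})$-set.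
   Context: $|A|$ is cardinality and $|A|_\delta$ the $\delta$-covering number. A bounded set $P$ in a metric space $X$ is a $(\delta,\sigma,C)$-set if $|P\cap B(x,r)|_\delta\le Cr^\sigma|P|_\delta$ for all $x\in X$, $r\ge\delta$; for subsets of $C^2([0,1]^{n-1},[0,1])$ the metric is the $C^2$-norm metric. Cinematic family: for a domain $U\subset\mathbb{R}^k$, $F\subset C^2(U)$ is a cinematic family with cinematic constant $K$, doubling constant $D$ and modulus of continuity $\alpha$ if: (1) $F$ lies in a ball of diameter $K$ in $C^2(U)$; (2) $F$ is doubling with constant at most $D$; (3) for all $f,g\in F$ and $\xi\in S^{k-1}$, $\inf_{x\in U}\{|f-g|(x)+|\nabla f-\nabla g|(x)+|\nabla_\xi\nabla_\xi(f-g)(x)|\}\ge K^{-1}\|f-g\|_{C^2(U)}$, with $\nabla_\xi\nabla_\xi h=\langle\nabla^2h\,\xi,\xi\rangle$; (4) there is an increasing continuous $\alpha:[0,1]\to[0,\infty)$, $\alpha(0)=0$, $0<\alpha(s)\le K^{-1}s$ for $s\in(0,1]$, such that for all $f,g\in F$, $\xi\in S^{k-1}$, sufficiently small $\eta>0$ and $x,y\in U$ with $|x-y|\le\alpha(\eta)$: $|\nabla_\xi\nabla_\xi(f-g)(x)-\nabla_\xi\nabla_\xi(f-g)(y)|\le\eta$. *)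

theory Defs
  imports "HOL-Analysis.Analysis"
begin

text \<open>Points of R^(n-1) are vectors real^'m with CARD('m) = n-1; points of R^n are pairs
  (x, y) :: real^'m \<times> real (Euclidean metric). The domain is the unit cube [0,1]^(n-1).\<close>

abbreviation ucube :: "(real^'m) set" where "ucube \<equiv> cbox 0 One"

definition is_C2_data :: "(real^'m) set \<Rightarrow> (real^'m \<Rightarrow> real) \<Rightarrow> (real^'m \<Rightarrow> real^'m)
    \<Rightarrow> (real^'m \<Rightarrow> real^'m^'m) \<Rightarrow> bool" where
  "is_C2_data U f g H \<longleftrightarrow>
     (\<forall>x\<in>U. (f has_derivative (\<lambda>h. g x \<bullet> h)) (at x within U) \<and>
             (g has_derivative (\<lambda>h. H x *v h)) (at x within U)) \<and> continuous_on U H"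

definition C2_on :: "(real^'m) set \<Rightarrow> (real^'m \<Rightarrow> real) \<Rightarrow> bool" where
  "C2_on U f \<longleftrightarrow> (\<exists>g H. is_C2_data U f g H)"

definition grad_on :: "(real^'m) set \<Rightarrow> (real^'m \<Rightarrow> real) \<Rightarrow> real^'m \<Rightarrow> real^'m" where
  "grad_on U f = fst (SOME gH. is_C2_data U f (fst gH) (snd gH))"

definition hess_on :: "(real^'m) set \<Rightarrow> (real^'m \<Rightarrow> real) \<Rightarrow> real^'m \<Rightarrow> real^'m^'m" where
  "hess_on U f = snd (SOME gH. is_C2_data U f (fst gH) (snd gH))"

definition C2_norm :: "(real^'m) set \<Rightarrow> (real^'m \<Rightarrow> real) \<Rightarrow> real" where
  "C2_norm U f = (SUP x\<in>U. \<bar>f x\<bar>) + (SUP x\<in>U. norm (grad_on U f x))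
                 + (SUP x\<in>U. onorm (\<lambda>h. hess_on U f x *v h))"

definition C2_dist :: "(real^'m) set \<Rightarrow> (real^'m \<Rightarrow> real) \<Rightarrow> (real^'m \<Rightarrow> real) \<Rightarrow> real" where
  "C2_dist U f g = C2_norm U (\<lambda>x. f x - g x)"

definition ddir :: "(real^'m) set \<Rightarrow> (real^'m \<Rightarrow> real) \<Rightarrow> real^'m \<Rightarrow> real^'m \<Rightarrow> real" where
  "ddir U h \<xi> x = (hess_on U h x *v \<xi>) \<bullet> \<xi>"

definition C2_unit :: "(real^'m \<Rightarrow> real) set" where
  "C2_unit = {f. C2_on ucube f \<and> (\<forall>x\<in>ucube. 0 \<le> f x \<and> f x \<le> 1)}"

definition graph_on :: "(real^'m) set \<Rightarrow> (real^'m \<Rightarrow> real) \<Rightarrow> ((real^'m) \<times> real) set" where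
  "graph_on U f = {(x, f x) | x. x \<in> U}"

definition cov_num :: "'a set \<Rightarrow> ('a \<Rightarrow> 'a \<Rightarrow> real) \<Rightarrow> 'a set \<Rightarrow> real \<Rightarrow> nat" where
  "cov_num X d A \<delta> = (LEAST N. \<exists>C. C \<subseteq> X \<and> finite C \<and> card C = N \<and> (\<forall>a\<in>A. \<exists>c\<in>C. d c a \<le> \<delta>))"

definition separated :: "('a \<Rightarrow> 'a \<Rightarrow> real) \<Rightarrow> real \<Rightarrow> 'a set \<Rightarrow> bool" where
  "separated d \<delta> A \<longleftrightarrow> (\<forall>a\<in>A. \<forall>b\<in>A. a \<noteq> b \<longrightarrow> \<delta> \<le> d a b)"

definition dsc_set :: "'a set \<Rightarrow> ('a \<Rightarrow> 'a \<Rightarrow> real) \<Rightarrow> real \<Rightarrow> real \<Rightarrow> real \<Rightarrow> 'a set \<Rightarrow> bool" where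
  "dsc_set X d \<delta> \<sigma> C P \<longleftrightarrow>
     (\<exists>x0\<in>X. \<exists>R. \<forall>p\<in>P. d x0 p \<le> R) \<and>
     (\<forall>x\<in>X. \<forall>r. \<delta> \<le> r \<longrightarrow>
        real (cov_num X d (P \<inter> {y. d x y \<le> r}) \<delta>) \<le> C * r powr \<sigma> * real (cov_num X d P \<delta>))"

definition doubling :: "('a \<Rightarrow> 'a \<Rightarrow> real) \<Rightarrow> 'a set \<Rightarrow> nat \<Rightarrow> bool" where
  "doubling d A D \<longleftrightarrow> (\<forall>x\<in>A. \<forall>r>0. \<exists>C\<subseteq>A. finite C \<and> card C \<le> D \<and>
      (\<forall>y\<in>A. d x y \<le> r \<longrightarrow> (\<exists>c\<in>C. d c y \<le> r / 2)))"

definition cinematic :: "(real^'m) set \<Rightarrow> (real^'m \<Rightarrow> real) set \<Rightarrow> real \<Rightarrow> nat \<Rightarrow> (real \<Rightarrow> real) \<Rightarrow> bool" where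
  "cinematic U F K D \<alpha> \<longleftrightarrow>
     (\<forall>f\<in>F. C2_on U f) \<and>
     (\<exists>h. C2_on U h \<and> (\<forall>f\<in>F. C2_dist U f h \<le> K / 2)) \<and>
     doubling (C2_dist U) F D \<and>
     (\<forall>f\<in>F. \<forall>g\<in>F. \<forall>\<xi>::real^'m. norm \<xi> = 1 \<longrightarrow>
        (\<forall>x\<in>U. C2_dist U f g / K \<le> \<bar>f x - g x\<bar> + norm (grad_on U (\<lambda>y. f y - g y) x)
                                     + \<bar>ddir U (\<lambda>y. f y - g y) \<xi> x\<bar>)) \<and>
     continuous_on {0..1} \<alpha> \<and> mono_on {0..1} \<alpha> \<and> \<alpha> 0 = 0 \<and>
     (\<forall>s. 0 < s \<and> s \<le> 1 \<longrightarrow> 0 < \<alpha> s \<and> \<alpha> s \<le> s / K) \<and>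
     (\<forall>f\<in>F. \<forall>g\<in>F. \<forall>\<xi>::real^'m. norm \<xi> = 1 \<longrightarrow>
        (\<exists>\<eta>0>0. \<forall>\<eta>. 0 < \<eta> \<and> \<eta> \<le> \<eta>0 \<longrightarrow>
           (\<forall>x\<in>U. \<forall>y\<in>U. dist x y \<le> \<alpha> \<eta> \<longrightarrow>
              \<bar>ddir U (\<lambda>z. f z - g z) \<xi> x - ddir U (\<lambda>z. f z - g z) \<xi> y\<bar> \<le> \<eta>)))"

end

theory Submission
  imports Defs
begin

text \<open>A C^2 function f with C^2 norm at most K is K-Lipschitz, so on graph(f) the projection
  (x, f x) \<mapsto> x is bi-Lipschitz with constants depending only on K and n. Hence E(f) and its
  projection P have comparable \<delta>-covering numbers (P is \<delta>/(1+K)-separated, and a \<delta>-ball holds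
  boundedly many such points), and a ball of radius r centred near P lifts to a ball of radius
  2(1+K)r centred at a point of E(f). The (\<delta>, n-2+s, \<delta>^-2\<epsilon>) bound for E(f) therefore passes to P with
  a constant loss, which \<delta>^-\<epsilon> absorbs for small \<delta>; this works for every \<epsilon>, and we take
  \<epsilon> = 1/2.\<close>

lemma is_C2_data_grad_hess:
  assumes "C2_on U f"
  shows "is_C2_data U f (grad_on U f) (hess_on U f)"
proof -
  obtain g H where "is_C2_data U f g H" using assms unfolding C2_on_def by blast
  then have "\<exists>gH. is_C2_data U f (fst gH) (snd gH)" by (intro exI[of _ "(g, H)"]) simp
  from someI_ex[OF this] show ?thesis unfolding grad_on_def hess_on_def .
qed

lemma norm_grad_le_C2_norm:
  assumes U: "compact U" and f: "C2_on U f" and x: "x \<in> U"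
  shows "norm (grad_on U f x) \<le> C2_norm U f"
proof -
  define G H where "G = grad_on U f" and "H = hess_on U f"
  have dg: "\<And>x. x \<in> U \<Longrightarrow> (f has_derivative (\<lambda>h. G x \<bullet> h)) (at x within U)"
    and dG: "\<And>x. x \<in> U \<Longrightarrow> (G has_derivative (\<lambda>h. H x *v h)) (at x within U)"
    and cH: "continuous_on U H"
    using is_C2_data_grad_hess[OF f] unfolding is_C2_data_def G_def H_def by auto
  have bdd_f: "bdd_above ((\<lambda>x. \<bar>f x\<bar>) ` U)"
    by (intro bounded_imp_bdd_above compact_imp_bounded compact_continuous_image U
        continuous_intros has_derivative_continuous_on[OF dg])
  have bdd_G: "bdd_above ((\<lambda>x. norm (G x)) ` U)"
    by (intro bounded_imp_bdd_above compact_imp_bounded compact_continuous_image U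
        continuous_intros has_derivative_continuous_on[OF dG])
  obtain B where B: "\<And>x. x \<in> U \<Longrightarrow> (\<Sum>i\<in>UNIV. \<Sum>j\<in>UNIV. \<bar>H x $ i $ j\<bar>) \<le> B"
  proof -
    have "bdd_above ((\<lambda>x. \<Sum>i\<in>UNIV. \<Sum>j\<in>UNIV. \<bar>H x $ i $ j\<bar>) ` U)"
      by (intro bounded_imp_bdd_above compact_imp_bounded compact_continuous_image U
          continuous_intros cH)
    then show ?thesis using that by (auto simp: bdd_above_def)
  qed
  have bdd_H: "bdd_above ((\<lambda>x. onorm (\<lambda>h. H x *v h)) ` U)"
    unfolding bdd_above_def
    by (rule exI[of _ B]) (auto intro: order_trans[OF onorm_le_matrix_component_sum B])
  have "0 \<le> (SUP x\<in>U. \<bar>f x\<bar>)"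
    by (rule order_trans[OF _ cSUP_upper[OF x bdd_f]]) simp
  moreover have "0 \<le> (SUP x\<in>U. onorm (\<lambda>h. H x *v h))"
    by (rule order_trans[OF _ cSUP_upper[OF x bdd_H]]) (rule onorm_pos_le, simp)
  moreover have "norm (G x) \<le> (SUP x\<in>U. norm (G x))" by (rule cSUP_upper[OF x bdd_G])
  ultimately show ?thesis unfolding C2_norm_def G_def H_def by linarith
qed

lemma C2_lipschitz:
  assumes U: "compact U" "convex U" and f: "C2_on U f" and p: "p \<in> U" and q: "q \<in> U"
  shows "\<bar>f p - f q\<bar> \<le> C2_norm U f * dist p q"
proof -
  have df: "\<And>x. x \<in> U \<Longrightarrow> (f has_derivative (\<lambda>h. grad_on U f x \<bullet> h)) (at x within U)"
    using is_C2_data_grad_hess[OF f] unfolding is_C2_data_def by auto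
  have "onorm (\<lambda>h. grad_on U f x \<bullet> h) \<le> C2_norm U f" if "x \<in> U" for x
  proof -
    have "onorm (\<lambda>h. grad_on U f x \<bullet> h) \<le> norm (grad_on U f x)"
      by (rule onorm_bound) (simp, metis Cauchy_Schwarz_ineq2 real_norm_def)
    then show ?thesis using norm_grad_le_C2_norm[OF U(1) f that] by linarith
  qed
  from differentiable_bound[OF U(2) df this p q] show ?thesis by (simp add: dist_norm)
qed

lemma cov_num_le_card:
  assumes "C \<subseteq> X" "finite C" "\<forall>a\<in>A. \<exists>c\<in>C. d c a \<le> \<delta>"
  shows "cov_num X d A \<delta> \<le> card C"
  unfolding cov_num_def by (rule Least_le) (use assms in blast)

lemma cov_num_dist_le_card:
  fixes A :: "'a::metric_space set"
  assumes "finite A" "0 \<le> \<delta>"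
  shows "cov_num UNIV dist A \<delta> \<le> card A"
  by (rule cov_num_le_card) (use assms in force)+

lemma obtain_minimal_dist_cover:
  fixes A :: "'a::metric_space set"
  assumes "finite A" "0 \<le> \<delta>"
  obtains C where "finite C" "card C = cov_num UNIV dist A \<delta>" "\<forall>a\<in>A. \<exists>c\<in>C. dist c a \<le> \<delta>"
proof -
  have "\<exists>N C. C \<subseteq> UNIV \<and> finite C \<and> card C = N \<and> (\<forall>a\<in>A. \<exists>c\<in>C. dist c a \<le> \<delta>)"
    using assms by (intro exI[of _ "card A"] exI[of _ A]) force
  from LeastI_ex[OF this] show ?thesis using that unfolding cov_num_def by blast
qed

lemma cov_num_contraction_image_le:
  fixes \<phi> :: "'a::metric_space \<Rightarrow> 'b::metric_space"
  assumes "finite B" "0 \<le> \<delta>" "\<And>x y. dist (\<phi> x) (\<phi> y) \<le> dist x y" "A \<subseteq> \<phi> ` B"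
  shows "cov_num UNIV dist A \<delta> \<le> cov_num UNIV dist B \<delta>"
proof -
  obtain C where C: "finite C" "card C = cov_num UNIV dist B \<delta>" "\<forall>b\<in>B. \<exists>c\<in>C. dist c b \<le> \<delta>"
    using obtain_minimal_dist_cover[OF assms(1,2)] .
  have "\<forall>a\<in>A. \<exists>c\<in>\<phi> ` C. dist c a \<le> \<delta>"
  proof
    fix a assume "a \<in> A"
    then obtain b where b: "b \<in> B" "a = \<phi> b" using assms(4) by blast
    then obtain c where "c \<in> C" "dist c b \<le> \<delta>" using C(3) by blast
    then show "\<exists>c\<in>\<phi> ` C. dist c a \<le> \<delta>" using b assms(3)[of c b] by force
  qed
  then have "cov_num UNIV dist A \<delta> \<le> card (\<phi> ` C)" by (intro cov_num_le_card) (use C in auto)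
  also have "\<dots> \<le> card C" by (rule card_image_le[OF C(1)])
  finally show ?thesis using C(2) by simp
qed

lemma separated_subset: "separated d \<delta> A \<Longrightarrow> B \<subseteq> A \<Longrightarrow> separated d \<delta> B"
  unfolding separated_def by blast

definition lattice_cube_card :: "nat \<Rightarrow> real \<Rightarrow> nat" where
  "lattice_cube_card m x = nat (2 * \<lceil>real m * x\<rceil> + 1) ^ m"

lemma lattice_cube_card_pos:
  assumes "0 \<le> x" shows "0 < lattice_cube_card m x"
proof -
  have "0 \<le> real m * x" using assms by simp
  then show ?thesis unfolding lattice_cube_card_def by simp
qed

lemma card_separated_in_cball_le:
  fixes Q :: "(real^'m) set"
  assumes Q: "Q \<subseteq> cball c R" and sep: "separated dist \<rho> Q" and \<rho>: "0 < \<rho>"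
  shows "card Q \<le> lattice_cube_card CARD('m) (R / \<rho>)"
proof -
  define h where "h = \<rho> / CARD('m)"
  define L where "L = \<lceil>real CARD('m) * (R / \<rho>)\<rceil>"
  \<comment> \<open>A cell of the grid of mesh h = \<rho>/m has l1-diameter below \<rho>, so it holds at most one point of Q.\<close>
  define \<phi> where "\<phi> q = (\<lambda>i. \<lfloor>(q $ i - c $ i) / h\<rfloor>)" for q :: "real^'m"
  have h: "0 < h" using \<rho> by (simp add: h_def)
  have inj: "inj_on \<phi> Q"
  proof (rule inj_onI)
    fix q q' assume q: "q \<in> Q" and q': "q' \<in> Q" and eq: "\<phi> q = \<phi> q'"
    have "\<bar>q $ i - q' $ i\<bar> < h" for i
    proof -
      have "\<bar>(q $ i - c $ i) / h - (q' $ i - c $ i) / h\<bar> < 1"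
        using fun_cong[OF eq, of i] unfolding \<phi>_def by linarith
      then show ?thesis using h by (simp add: diff_divide_distrib[symmetric] abs_divide)
    qed
    then have "(\<Sum>i\<in>UNIV. \<bar>(q - q') $ i\<bar>) < (\<Sum>i\<in>(UNIV::'m set). h)"
      by (intro sum_strict_mono) auto
    with norm_le_l1_cart[of "q - q'"] have "dist q q' < \<rho>"
      using \<rho> by (simp add: h_def dist_norm)
    with sep q q' show "q = q'" unfolding separated_def by force
  qed
  have img: "\<phi> ` Q \<subseteq> (\<Pi>\<^sub>E i\<in>UNIV. {-L..L})"
  proof (rule image_subsetI)
    fix q assume q: "q \<in> Q"
    have "\<phi> q i \<in> {-L..L}" for i
    proof -
      have "\<bar>q $ i - c $ i\<bar> \<le> R"
        using q Q component_le_norm_cart[of "q - c" i] by (auto simp: dist_norm norm_minus_commute)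
      then have "\<bar>(q $ i - c $ i) / h\<bar> \<le> R / h"
        using h by (simp add: abs_divide divide_right_mono)
      also have "\<dots> = real CARD('m) * (R / \<rho>)" by (simp add: h_def)
      also have "\<dots> \<le> L" unfolding L_def by (rule le_of_int_ceiling)
      finally have "- L \<le> (q $ i - c $ i) / h" "(q $ i - c $ i) / h \<le> L" by linarith+
      then show ?thesis unfolding \<phi>_def by (simp add: le_floor_iff floor_le_iff)
    qed
    then show "\<phi> q \<in> (\<Pi>\<^sub>E i\<in>UNIV. {-L..L})" by (simp add: PiE_UNIV_domain)
  qed
  have "card Q = card (\<phi> ` Q)" by (rule card_image[OF inj, symmetric])
  also have "\<dots> \<le> card (\<Pi>\<^sub>E i\<in>(UNIV::'m set). {-L..L})"
    by (rule card_mono[OF _ img]) (simp add: finite_PiE)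
  also have "\<dots> = lattice_cube_card CARD('m) (R / \<rho>)"
    by (simp add: card_PiE lattice_cube_card_def L_def)
  finally show ?thesis .
qed

lemma card_separated_le_cov_num:
  fixes Q :: "(real^'m) set"
  assumes fin: "finite Q" and sep: "separated dist \<rho> Q" and \<rho>: "0 < \<rho>" and \<delta>: "0 \<le> \<delta>"
  shows "card Q \<le> cov_num UNIV dist Q \<delta> * lattice_cube_card CARD('m) (\<delta> / \<rho>)"
proof -
  obtain C where C: "finite C" "card C = cov_num UNIV dist Q \<delta>" "\<forall>q\<in>Q. \<exists>c\<in>C. dist c q \<le> \<delta>"
    using obtain_minimal_dist_cover[OF fin \<delta>] .
  have "Q = (\<Union>c\<in>C. Q \<inter> cball c \<delta>)" using C(3) by auto
  then have "card Q \<le> (\<Sum>c\<in>C. card (Q \<inter> cball c \<delta>))"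
    by (metis card_UN_le[OF C(1)])
  also have "\<dots> \<le> (\<Sum>c\<in>C. lattice_cube_card CARD('m) (\<delta> / \<rho>))"
    by (intro sum_mono card_separated_in_cball_le separated_subset[OF sep] \<rho>) auto
  finally show ?thesis using C(2) by simp
qed

lemma dist_graph_le:
  assumes lip: "\<And>p q. p \<in> U \<Longrightarrow> q \<in> U \<Longrightarrow> \<bar>g p - g q\<bar> \<le> K * dist p q"
    and p: "p \<in> U" and q: "q \<in> U"
  shows "dist (p, g p) (q, g q) \<le> (1 + K) * dist p q"
proof -
  have "dist (p, g p) (q, g q) \<le> dist p q + dist (g p) (g q)"
    by (simp add: dist_Pair_Pair sqrt_sum_squares_le_sum)
  also have "\<dots> \<le> (1 + K) * dist p q"
    using lip[OF p q] by (simp add: dist_real_def algebra_simps)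
  finally show ?thesis .
qed

lemma inj_on_fst_graph: "inj_on fst (graph_on U g)"
  unfolding graph_on_def inj_on_def by auto

lemma separated_fst_graph:
  assumes lip: "\<And>p q. p \<in> U \<Longrightarrow> q \<in> U \<Longrightarrow> \<bar>g p - g q\<bar> \<le> K * dist p q" and K: "0 \<le> K"
    and EG: "E \<subseteq> graph_on U g" and sep: "separated dist \<delta> E"
  shows "separated dist (\<delta> / (1 + K)) (fst ` E)"
  unfolding separated_def
proof clarify
  fix e e' assume e: "e \<in> E" and e': "e' \<in> E" and ne: "fst e \<noteq> fst e'"
  obtain p p' where p: "p \<in> U" "e = (p, g p)" and p': "p' \<in> U" "e' = (p', g p')"
    using EG e e' unfolding graph_on_def by blast
  have "e \<noteq> e'" using ne by auto
  then have "\<delta> \<le> dist e e'" using sep e e' unfolding separated_def by blast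
  also have "\<dots> \<le> (1 + K) * dist p p'" using dist_graph_le[OF lip p(1) p'(1)] p p' by simp
  finally show "\<delta> / (1 + K) \<le> dist (fst e) (fst e')"
    using K p p' by (simp add: divide_le_eq mult.commute)
qed

lemma cov_num_le_cov_num_fst_graph:
  fixes g :: "real^'m \<Rightarrow> real" and E :: "((real^'m) \<times> real) set"
  assumes lip: "\<And>p q. p \<in> U \<Longrightarrow> q \<in> U \<Longrightarrow> \<bar>g p - g q\<bar> \<le> K * dist p q" and K: "0 \<le> K"
    and EG: "E \<subseteq> graph_on U g" and fE: "finite E" and sep: "separated dist \<delta> E" and \<delta>: "0 < \<delta>"
  shows "cov_num UNIV dist E \<delta> \<le> lattice_cube_card CARD('m) (1 + K) * cov_num UNIV dist (fst ` E) \<delta>"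
proof -
  have "cov_num UNIV dist E \<delta> \<le> card E" by (rule cov_num_dist_le_card) (use fE \<delta> in auto)
  also have "\<dots> = card (fst ` E)"
    by (rule card_image[symmetric], rule inj_on_subset[OF inj_on_fst_graph EG])
  also have "\<dots> \<le> cov_num UNIV dist (fst ` E) \<delta> * lattice_cube_card CARD('m) (\<delta> / (\<delta> / (1 + K)))"
    by (rule card_separated_le_cov_num[OF _ separated_fst_graph[OF lip K EG sep]])
      (use fE \<delta> K in auto)
  also have "\<dots> = lattice_cube_card CARD('m) (1 + K) * cov_num UNIV dist (fst ` E) \<delta>"
    using \<delta> K by simp
  finally show ?thesis .
qed

lemma fst_graph_inter_ball_subset:
  assumes lip: "\<And>p q. p \<in> U \<Longrightarrow> q \<in> U \<Longrightarrow> \<bar>g p - g q\<bar> \<le> K * dist p q" and K: "0 \<le> K"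
    and EG: "E \<subseteq> graph_on U g" and e0: "e0 \<in> E" "dist x (fst e0) \<le> r"
  shows "fst ` E \<inter> {y. dist x y \<le> r} \<subseteq> fst ` (E \<inter> {e. dist e0 e \<le> 2 * (1 + K) * r})"
proof
  fix y assume y: "y \<in> fst ` E \<inter> {y. dist x y \<le> r}"
  then obtain e where e: "e \<in> E" "y = fst e" by auto
  obtain p p0 where p: "p \<in> U" "e = (p, g p)" and p0: "p0 \<in> U" "e0 = (p0, g p0)"
    using EG e e0 unfolding graph_on_def by blast
  have "dist p0 p \<le> 2 * r"
    using dist_triangle[of p0 p x] e0 y e p p0 by (simp add: dist_commute)
  have "dist e0 e \<le> (1 + K) * dist p0 p" using dist_graph_le[OF lip p0(1) p(1)] p p0 by simp
  also have "\<dots> \<le> (1 + K) * (2 * r)" using \<open>dist p0 p \<le> 2 * r\<close> K by (intro mult_left_mono) auto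
  finally have "dist e0 e \<le> 2 * (1 + K) * r" by (simp add: mult_ac)
  with e show "y \<in> fst ` (E \<inter> {e. dist e0 e \<le> 2 * (1 + K) * r})" by auto
qed

lemma dsc_set_fst_image_graph:
  fixes g :: "real^'m \<Rightarrow> real" and E :: "((real^'m) \<times> real) set"
  assumes lip: "\<And>p q. p \<in> U \<Longrightarrow> q \<in> U \<Longrightarrow> \<bar>g p - g q\<bar> \<le> K * dist p q" and K: "0 \<le> K"
    and EG: "E \<subseteq> graph_on U g" and fE: "finite E" and sep: "separated dist \<delta> E" and \<delta>: "0 < \<delta>"
    and dE: "dsc_set UNIV dist \<delta> \<sigma> C E" and C: "0 \<le> C"
  shows "dsc_set UNIV dist \<delta> \<sigma> (C * (2 * (1 + K)) powr \<sigma> * lattice_cube_card CARD('m) (1 + K))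
           (fst ` E)"
proof -
  define P A N where "P = fst ` E" and "A = 2 * (1 + K)" and "N = lattice_cube_card CARD('m) (1 + K)"
  have A: "1 \<le> A" using K by (simp add: A_def)
  have cov_E: "real (cov_num UNIV dist E \<delta>) \<le> real N * real (cov_num UNIV dist P \<delta>)"
    using cov_num_le_cov_num_fst_graph[OF lip K EG fE sep \<delta>] unfolding N_def P_def
    by (metis of_nat_le_iff of_nat_mult)
  have "real (cov_num UNIV dist (P \<inter> {y. dist x y \<le> r}) \<delta>)
          \<le> C * A powr \<sigma> * N * r powr \<sigma> * real (cov_num UNIV dist P \<delta>)" if r: "\<delta> \<le> r" for x r
  proof (cases "P \<inter> {y. dist x y \<le> r} = {}")
    case True
    then have "cov_num UNIV dist (P \<inter> {y. dist x y \<le> r}) \<delta> = 0"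
      using cov_num_dist_le_card[of "{}" \<delta>] \<delta> by simp
    moreover have "0 \<le> C * A powr \<sigma> * N * r powr \<sigma> * real (cov_num UNIV dist P \<delta>)" using C by simp
    ultimately show ?thesis by simp
  next
    case False
    then obtain e0 where e0: "e0 \<in> E" "dist x (fst e0) \<le> r" unfolding P_def by auto
    have "1 * r \<le> A * r" by (rule mult_right_mono[OF A]) (use r \<delta> in linarith)
    then have Ar: "\<delta> \<le> A * r" using r by simp
    have lift: "P \<inter> {y. dist x y \<le> r} \<subseteq> fst ` (E \<inter> {e. dist e0 e \<le> A * r})"
      using fst_graph_inter_ball_subset[OF lip K EG e0] unfolding P_def A_def .
    have "cov_num UNIV dist (P \<inter> {y. dist x y \<le> r}) \<delta> \<le> cov_num UNIV dist (E \<inter> {e. dist e0 e \<le> A * r}) \<delta>"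
      using \<delta> by (intro cov_num_contraction_image_le[OF _ _ dist_fst_le lift]) (use fE in auto)
    also have "real \<dots> \<le> C * (A * r) powr \<sigma> * real (cov_num UNIV dist E \<delta>)"
      using dE[unfolded dsc_set_def] Ar by blast
    also have "\<dots> \<le> C * (A powr \<sigma> * r powr \<sigma>) * (N * real (cov_num UNIV dist P \<delta>))"
      using A r \<delta> C cov_E by (intro mult_mono) (auto simp: powr_mult)
    finally show ?thesis by (simp add: mult_ac)
  qed
  moreover have "bounded P" unfolding P_def using fE by (simp add: finite_imp_bounded)
  ultimately show ?thesis unfolding dsc_set_def bounded_def A_def N_def P_def by blast
qed

lemma dsc_set_mono_const:
  assumes "dsc_set X d \<delta> \<sigma> C P" "C \<le> C'"
  shows "dsc_set X d \<delta> \<sigma> C' P"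
  using assms unfolding dsc_set_def by (meson mult_right_mono order_trans of_nat_0_le_iff powr_ge_zero)

lemma le_powr_neg_if_le_powr:
  fixes \<epsilon> c \<delta> :: real
  assumes "0 < \<epsilon>" "0 < c" "0 < \<delta>" "\<delta> \<le> c powr (-1 / \<epsilon>)"
  shows "c \<le> \<delta> powr (-\<epsilon>)"
proof -
  have "c = (c powr (-1 / \<epsilon>)) powr (-\<epsilon>)" using assms by (simp add: powr_powr)
  also have "\<dots> \<le> \<delta> powr (-\<epsilon>)" using assms by (intro powr_mono2') auto
  finally show ?thesis .
qed

lemma dsc_set_fst_image_graph_small_scale:
  fixes g :: "real^'m \<Rightarrow> real" and E :: "((real^'m) \<times> real) set"
  assumes lip: "\<And>p q. p \<in> U \<Longrightarrow> q \<in> U \<Longrightarrow> \<bar>g p - g q\<bar> \<le> K * dist p q" and K: "0 \<le> K"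
    and EG: "E \<subseteq> graph_on U g" and fE: "finite E" and sep: "separated dist \<delta> E"
    and \<delta>: "0 < \<delta>" and \<epsilon>: "0 < \<epsilon>" and dE: "dsc_set UNIV dist \<delta> \<sigma> (\<delta> powr (-2*\<epsilon>)) E"
    and small: "\<delta> \<le> ((2 * (1 + K)) powr \<sigma> * lattice_cube_card CARD('m) (1 + K)) powr (-1 / \<epsilon>)"
  shows "dsc_set UNIV dist \<delta> \<sigma> (\<delta> powr (-3*\<epsilon>)) (fst ` E)"
proof -
  define Ct where "Ct = (2 * (1 + K)) powr \<sigma> * lattice_cube_card CARD('m) (1 + K)"
  have "0 < Ct" using K by (simp add: Ct_def lattice_cube_card_pos)
  then have "Ct \<le> \<delta> powr (-\<epsilon>)" by (rule le_powr_neg_if_le_powr[OF \<epsilon> _ \<delta> small[folded Ct_def]])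
  then have "\<delta> powr (-2*\<epsilon>) * Ct \<le> \<delta> powr (-2*\<epsilon>) * \<delta> powr (-\<epsilon>)" by (rule mult_left_mono) simp
  also have "\<dots> = \<delta> powr (-3*\<epsilon>)" unfolding powr_add[symmetric] by simp
  finally have const: "\<delta> powr (-2*\<epsilon>) * Ct \<le> \<delta> powr (-3*\<epsilon>)" .
  have "dsc_set UNIV dist \<delta> \<sigma> (\<delta> powr (-2*\<epsilon>) * Ct) (fst ` E)"
    using dsc_set_fst_image_graph[OF lip K EG fE sep \<delta> dE] unfolding Ct_def by (simp add: mult.assoc)
  from dsc_set_mono_const[OF this const] show ?thesis .
qed

theorem lemma4p2:
  fixes s K :: real
  assumes "CARD('m) \<ge> 2" and "0 < s" and "s \<le> 1" and "0 < K"
  shows "\<exists>\<epsilon>. 0 < \<epsilon> \<and> \<epsilon> \<le> 1/2 \<and> (\<exists>\<delta>0. 0 < \<delta>0 \<and> \<delta>0 \<le> 1/2 \<and>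
    (\<forall>t \<delta> (F :: (real^'m \<Rightarrow> real) set) D \<alpha> (E :: (real^'m \<Rightarrow> real) \<Rightarrow> ((real^'m) \<times> real) set) (M :: nat) f.
       0 < t \<longrightarrow> t \<le> s \<longrightarrow> 0 < \<delta> \<longrightarrow> \<delta> \<le> \<delta>0 \<longrightarrow>
       finite F \<longrightarrow> F \<subseteq> C2_unit \<longrightarrow> separated (C2_dist ucube) \<delta> F \<longrightarrow>
       cinematic ucube F K D \<alpha> \<longrightarrow>
       dsc_set C2_unit (C2_dist ucube) \<delta> t (\<delta> powr (-2*\<epsilon>)) F \<longrightarrow>
       1/2 * \<delta> powr (2*\<epsilon> - t) \<le> real (card F) \<longrightarrow> real (card F) \<le> \<delta> powr (-t) \<longrightarrow>
       (\<forall>g\<in>F. C2_norm ucube g \<le> K) \<longrightarrow>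
       \<delta> powr (2*\<epsilon> - (real CARD('m) - 1 + s)) \<le> real M \<longrightarrow>
       real M \<le> \<delta> powr (-(real CARD('m) - 1 + s)) \<longrightarrow>
       (\<forall>g\<in>F. finite (E g) \<and> E g \<subseteq> graph_on ucube g \<and> separated dist \<delta> (E g) \<and>
              dsc_set UNIV dist \<delta> (real CARD('m) - 1 + s) (\<delta> powr (-2*\<epsilon>)) (E g) \<and>
              card (E g) = M) \<longrightarrow>
       f \<in> F \<longrightarrow>
       dsc_set UNIV dist \<delta> (real CARD('m) - 1 + s) (\<delta> powr (-3*\<epsilon>)) (fst ` E f)))"
proof -
  define Ct where "Ct = (2 * (1 + K)) powr (real CARD('m) - 1 + s) * lattice_cube_card CARD('m) (1 + K)"
  define \<delta>0 where "\<delta>0 = min (1/2) (Ct powr -2)"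
  have \<delta>0: "0 < \<delta>0" "\<delta>0 \<le> 1/2" using assms by (auto simp: \<delta>0_def Ct_def lattice_cube_card_pos)
  show ?thesis
  proof (rule exI[of _ "1/2"], intro conjI, simp, simp, rule exI[of _ \<delta>0], intro conjI \<delta>0 allI impI)
    fix t \<delta> :: real and F :: "(real^'m \<Rightarrow> real) set" and D :: nat and \<alpha> :: "real \<Rightarrow> real"
      and E :: "(real^'m \<Rightarrow> real) \<Rightarrow> ((real^'m) \<times> real) set" and M :: nat and f
    assume \<delta>: "0 < \<delta>" "\<delta> \<le> \<delta>0" and FC: "F \<subseteq> C2_unit"
      and Fn: "\<forall>g\<in>F. C2_norm ucube g \<le> K"
      and EH: "\<forall>g\<in>F. finite (E g) \<and> E g \<subseteq> graph_on ucube g \<and> separated dist \<delta> (E g) \<and>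
              dsc_set UNIV dist \<delta> (real CARD('m) - 1 + s) (\<delta> powr (-2*(1/2))) (E g) \<and>
              card (E g) = M"
      and f: "f \<in> F"
    have "C2_on ucube f" using FC f by (auto simp: C2_unit_def)
    then have lip: "\<bar>f p - f q\<bar> \<le> K * dist p q" if "p \<in> ucube" "q \<in> ucube" for p q
      using C2_lipschitz[OF compact_cbox convex_box(1) _ that] Fn f
      by (meson mult_right_mono order_trans zero_le_dist)
    from EH f have EG: "E f \<subseteq> graph_on ucube f" and fE: "finite (E f)" and sep: "separated dist \<delta> (E f)"
      and dE: "dsc_set UNIV dist \<delta> (real CARD('m) - 1 + s) (\<delta> powr (-2*(1/2))) (E f)"
      by auto
    have small: "\<delta> \<le> Ct powr (-1 / (1/2))" using \<delta> by (simp add: \<delta>0_def)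
    show "dsc_set UNIV dist \<delta> (real CARD('m) - 1 + s) (\<delta> powr (-3*(1/2))) (fst ` E f)"
      using assms(4) by (intro dsc_set_fst_image_graph_small_scale[OF lip _ EG fE sep \<delta>(1) _ dE
          small[unfolded Ct_def]]) auto
  qed
qed

end
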